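(* Let $\alpha=a_1a_2\cdots a_n\neq 0^n$ be a bracelet over $\{0,\dots,k-1\}$, and let $i$ be the index of the first nonzero symbol of $\alpha$. If $a_i>1$, then $\mathrm{FirstNonMin}(\alpha)=0^{i-1}(a_i-1)a_{i+1}\cdots a_n$ is a bracelet; moreover, if in addition $\alpha\in\mathbf{A}_k(n)$, then $\mathrm{FirstNonMin}(\alpha)\in\mathbf{A}_k(n)$.
   Context: Let $\Sigma=\{0,1,\dots,k-1\}$, $k\ge 2$. Strings are compared lexicographically ($\alpha<\beta$ if $\alpha$ is a proper prefix of $\beta$, or $\alpha$ has the smaller symbol at the first index where they differ). For $\alpha=a_1\cdots a_n$, $\alpha^R=a_n\cdots a_1$. $[\alpha]$ denotes the set of all rotations of $\alpha$. $\alpha$ is a necklace if it is the lexicographically smallest element of $[\alpha]$; $\alpha$ is a bracelet if it is the lexicographically smallest element of $[\alpha]\cup[\alpha^R]$. A necklace $\alpha$ is symmetric if $\alpha^R\in[\alpha]$ and asymmetric otherwise. $\mathbf{A}_k(n)$ is the set of asymmetric bracelets of length $n$ over $\Sigma$. *)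

theory Defs
  imports Main
begin

definition over_alphabet :: "nat \<Rightarrow> nat list \<Rightarrow> bool" where
  "over_alphabet k xs \<longleftrightarrow> (\<forall>a\<in>set xs. a < k)"

definition lex_less :: "nat list \<Rightarrow> nat list \<Rightarrow> bool" where
  "lex_less xs ys \<longleftrightarrow> lexordp (<) xs ys"

definition lex_le :: "nat list \<Rightarrow> nat list \<Rightarrow> bool" where
  "lex_le xs ys \<longleftrightarrow> lex_less xs ys \<or> xs = ys"

definition rotations :: "nat list \<Rightarrow> nat list set" where
  "rotations xs = {rotate m xs | m. m < length xs} \<union> {xs}"

definition is_necklace :: "nat list \<Rightarrow> bool" where
  "is_necklace xs \<longleftrightarrow> (\<forall>ys\<in>rotations xs. lex_le xs ys)"

definition is_bracelet :: "nat list \<Rightarrow> bool" where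
  "is_bracelet xs \<longleftrightarrow> (\<forall>ys\<in>rotations xs \<union> rotations (rev xs). lex_le xs ys)"

definition symmetric_necklace :: "nat list \<Rightarrow> bool" where
  "symmetric_necklace xs \<longleftrightarrow> is_necklace xs \<and> rev xs \<in> rotations xs"

definition asymmetric_necklace :: "nat list \<Rightarrow> bool" where
  "asymmetric_necklace xs \<longleftrightarrow> is_necklace xs \<and> rev xs \<notin> rotations xs"

definition asym_bracelets :: "nat \<Rightarrow> nat \<Rightarrow> nat list set" where
  "asym_bracelets k n = {xs. length xs = n \<and> over_alphabet k xs \<and> is_bracelet xs \<and> asymmetric_necklace xs}"

definition first_nonzero :: "nat list \<Rightarrow> nat" where
  "first_nonzero xs = (LEAST i. i < length xs \<and> xs ! i \<noteq> 0)"

definition FirstNonMin :: "nat list \<Rightarrow> nat list" where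
  "FirstNonMin xs = xs[first_nonzero xs := xs ! first_nonzero xs - 1]"

end

theory Submission
  imports Defs
begin

text \<open>Write \<open>\<beta>\<close> for \<open>\<alpha>\<close> with its first nonzero entry \<open>\<alpha> ! j \<ge> 2\<close> decremented. Every rotation
  \<open>\<gamma>'\<close> of \<open>\<beta>\<close> or of its reversal arises from the corresponding rotation \<open>\<gamma>\<close> of \<open>\<alpha>\<close> or its
  reversal by decrementing one entry \<open>\<ge> 2\<close>, so \<open>\<gamma>'\<close> has the same zero entries as \<open>\<gamma>\<close>. If
  \<open>\<gamma>\<close> has a nonzero entry before position \<open>j\<close>, then \<open>\<beta> < \<gamma>'\<close> already there. Otherwise
  \<open>\<alpha> \<le> \<gamma>\<close> forces \<open>\<alpha> ! j \<le> \<gamma> ! j\<close>, and either \<open>\<beta>\<close> wins at position \<open>j\<close>, or both lists were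
  decremented at \<open>j\<close> from the same value, which preserves the comparison of \<open>\<alpha>\<close> and \<open>\<gamma>\<close>.
  Hence \<open>\<beta>\<close> is a bracelet, and \<open>\<beta>\<close> equals a rotation of its reversal only if \<open>\<alpha>\<close> does,
  so asymmetry is inherited.\<close>

lemma rotate_list_update:
  assumes "i < length xs"
  obtains p where "p < length xs" "rotate m xs ! p = xs ! i"
    and "rotate m (xs[i := v]) = (rotate m xs)[p := v]"
proof -
  define r where "r = m mod length xs"
  have "length xs > 0" using assms by linarith
  then have r: "r < length xs" by (simp add: r_def)
  have rot: "rotate m ys = drop r ys @ take r ys" if "length ys = length xs" for ys
    using that by (simp add: rotate_drop_take r_def)
  show thesis
  proof (cases "r \<le> i")
    case True
    show thesis
    proof (rule that[of "i - r"])
      show "rotate m (xs[i := v]) = (rotate m xs)[i - r := v]"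
        using True assms by (simp add: rot drop_update_swap list_update_append1)
    qed (use True assms in \<open>auto simp: rot nth_append\<close>)
  next
    case False
    show thesis
    proof (rule that[of "length xs - r + i"])
      show "rotate m (xs[i := v]) = (rotate m xs)[length xs - r + i := v]"
        using False r by (auto simp: rot take_update_swap list_update_append)
    qed (use False r in \<open>auto simp: rot nth_append\<close>)
  qed
qed

lemma rotations_eq_range: "rotations xs = range (\<lambda>m. rotate m xs)"
proof -
  have "rotate m xs \<in> {rotate m xs | m. m < length xs}" if "xs \<noteq> []" for m
    using that by (subst rotate_conv_mod) auto
  then show ?thesis
    unfolding rotations_def by (cases "xs = []") (auto intro: range_eqI[of _ _ 0])
qed

lemma rotate_inverse: "\<exists>m'. rotate m' (rotate m xs) = xs"
proof (cases "xs = []")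
  case False
  then have "m * (length xs - 1) + m = m * length xs"
    by (cases "length xs") (simp_all add: algebra_simps)
  then have "rotate (m * (length xs - 1)) (rotate m xs) = xs"
    by (simp add: rotate_rotate)
  then show ?thesis ..
qed simp

lemma rotations_sym: "ys \<in> rotations xs \<Longrightarrow> xs \<in> rotations ys"
proof -
  assume "ys \<in> rotations xs"
  then obtain m where "ys = rotate m xs" by (auto simp: rotations_eq_range)
  moreover obtain m' where "rotate m' (rotate m xs) = xs" using rotate_inverse by blast
  ultimately show ?thesis unfolding rotations_eq_range by (metis rangeI)
qed

lemma lex_less_iff_nth:
  assumes "length xs = length ys"
  shows "lex_less xs ys \<longleftrightarrow> (\<exists>i<length xs. (\<forall>q<i. xs ! q = ys ! q) \<and> xs ! i < ys ! i)"
  unfolding lex_less_def lexordp_def lexord_take_index_conv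
  using assms by (auto simp: list_eq_iff_nth_eq min_def) (metis not_le)+

lemma lex_less_list_update_same:
  assumes "lex_less xs ys" "length xs = length ys" "xs ! j = ys ! j"
  shows "lex_less (xs[j := v]) (ys[j := v])"
proof -
  obtain i where i: "i < length xs" "\<forall>q<i. xs ! q = ys ! q" "xs ! i < ys ! i"
    using assms(1,2) lex_less_iff_nth by blast
  with assms(3) have "i \<noteq> j" by auto
  have "xs[j := v] ! q = ys[j := v] ! q" if "q < i" for q
    using that i assms(2) by (cases "q = j") auto
  moreover have "xs[j := v] ! i < ys[j := v] ! i"
    using i \<open>i \<noteq> j\<close> by simp
  ultimately show ?thesis
    using i assms(2) lex_less_iff_nth[of "xs[j := v]" "ys[j := v]"] by auto
qed

lemma lex_le_nth_le:
  assumes "lex_le xs ys" "length xs = length ys"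
    and "j < length xs" "\<forall>q<j. xs ! q = ys ! q"
  shows "xs ! j \<le> ys ! j"
proof (rule ccontr)
  assume "\<not> xs ! j \<le> ys ! j"
  then have "xs \<noteq> ys" by auto
  with assms(1,2) obtain i where i: "i < length xs" "\<forall>q<i. xs ! q = ys ! q" "xs ! i < ys ! i"
    unfolding lex_le_def using lex_less_iff_nth by blast
  with assms(4) \<open>\<not> xs ! j \<le> ys ! j\<close> show False
    by (cases i j rule: linorder_cases) auto
qed

lemma lex_less_decrement_or_eq:
  fixes \<alpha> \<gamma> :: "nat list"
  assumes len: "length \<gamma> = length \<alpha>" and le: "lex_le \<alpha> \<gamma>"
    and j: "j < length \<alpha>" "\<forall>q<j. \<alpha> ! q = 0" "0 < \<alpha> ! j"
    and p: "p < length \<gamma>" "2 \<le> \<gamma> ! p"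
  defines "\<beta> \<equiv> \<alpha>[j := \<alpha> ! j - 1]" and "\<gamma>' \<equiv> \<gamma>[p := \<gamma> ! p - 1]"
  shows "lex_less \<beta> \<gamma>' \<or> (\<beta> = \<gamma>' \<and> \<alpha> = \<gamma>)"
proof -
  have lens: "length \<beta> = length \<alpha>" "length \<gamma>' = length \<alpha>"
    using len by (simp_all add: \<beta>_def \<gamma>'_def)
  have \<beta>_nth: "\<beta> ! q = (if q = j then \<alpha> ! j - 1 else \<alpha> ! q)" if "q < length \<alpha>" for q
    using that j(1) by (simp add: \<beta>_def)
  have \<gamma>'_nth: "\<gamma>' ! q = (if q = p then \<gamma> ! p - 1 else \<gamma> ! q)" if "q < length \<alpha>" for q
    using that p(1) len by (simp add: \<gamma>'_def)
  have lex_less_at: "lex_less \<beta> \<gamma>'" if "i < length \<alpha>" "\<forall>q<i. \<beta> ! q = \<gamma>' ! q" "\<beta> ! i < \<gamma>' ! i" for i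
    using that lens lex_less_iff_nth[of \<beta> \<gamma>'] by auto
  consider (early) m where "m < j" "\<gamma> ! m \<noteq> 0" "\<forall>q<m. \<gamma> ! q = 0"
    | (late) "\<forall>q<j. \<gamma> ! q = 0"
    using exists_least_iff[of "\<lambda>m. m < j \<and> \<gamma> ! m \<noteq> 0"] by (metis order.strict_trans)
  then show ?thesis
  proof cases
    case early
    have \<beta>_zero: "\<beta> ! q = 0" if "q < j" for q
      using that j \<beta>_nth by simp
    have \<gamma>'_zero: "\<gamma>' ! q = 0 \<longleftrightarrow> \<gamma> ! q = 0" if "q < length \<alpha>" for q
      using that p(2) \<gamma>'_nth by auto
    have m: "m < length \<alpha>" using early j(1) by simp
    have "\<forall>q<m. \<beta> ! q = \<gamma>' ! q"
      using early m \<beta>_zero \<gamma>'_zero by simp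
    moreover have "\<beta> ! m < \<gamma>' ! m"
      using early \<beta>_zero[of m] \<gamma>'_zero[OF m] by simp
    ultimately show ?thesis using lex_less_at m by blast
  next
    case late
    with j(2) have "\<alpha> ! j \<le> \<gamma> ! j" using lex_le_nth_le[OF le len[symmetric] j(1)] by simp
    have "j \<le> p" using late p(2) by (cases "p < j") auto
    show ?thesis
    proof (cases "p = j \<and> \<gamma> ! j = \<alpha> ! j")
      case True
      then have "\<gamma>' = \<gamma>[j := \<alpha> ! j - 1]" by (simp add: \<gamma>'_def)
      with True le len show ?thesis
        unfolding lex_le_def \<beta>_def using lex_less_list_update_same by auto
    next
      case False
      with \<open>\<alpha> ! j \<le> \<gamma> ! j\<close> \<open>j \<le> p\<close> j(3) have "\<beta> ! j < \<gamma>' ! j"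
        using \<beta>_nth \<gamma>'_nth j(1) by auto
      moreover have "\<forall>q<j. \<beta> ! q = \<gamma>' ! q"
        using late j \<beta>_nth \<gamma>'_nth \<open>j \<le> p\<close> by auto
      ultimately show ?thesis using lex_less_at j(1) by blast
    qed
  qed
qed

lemma bracelet_decrement:
  assumes br: "is_bracelet \<alpha>"
    and j: "j < length \<alpha>" "\<forall>q<j. \<alpha> ! q = 0" "2 \<le> \<alpha> ! j"
  defines "\<beta> \<equiv> \<alpha>[j := \<alpha> ! j - 1]"
  shows "is_bracelet \<beta>" and "\<beta> \<in> rotations (rev \<beta>) \<Longrightarrow> \<alpha> \<in> rotations (rev \<alpha>)"
proof -
  have cmp: "lex_less \<beta> (rotate m (xs[i := \<alpha> ! j - 1])) \<or>
      (\<beta> = rotate m (xs[i := \<alpha> ! j - 1]) \<and> \<alpha> = rotate m xs)"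
    if xs: "xs = \<alpha> \<or> xs = rev \<alpha>" and i: "i < length xs" "xs ! i = \<alpha> ! j" for xs i m
  proof -
    obtain p where p: "p < length xs" "rotate m xs ! p = xs ! i"
      and upd: "rotate m (xs[i := \<alpha> ! j - 1]) = (rotate m xs)[p := \<alpha> ! j - 1]"
      using rotate_list_update[OF i(1)] by blast
    have "rotate m xs \<in> rotations \<alpha> \<union> rotations (rev \<alpha>)"
      using xs by (auto simp: rotations_eq_range)
    then have "lex_le \<alpha> (rotate m xs)" using br unfolding is_bracelet_def by blast
    then show ?thesis
      using lex_less_decrement_or_eq[of "rotate m xs" \<alpha> j p] xs j p i upd
      by (auto simp: \<beta>_def)
  qed
  have rev_\<beta>: "rev \<beta> = (rev \<alpha>)[length \<alpha> - j - 1 := \<alpha> ! j - 1]"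
    using j(1) by (simp add: \<beta>_def rev_update)
  have cmp_\<beta>: "lex_less \<beta> (rotate m \<beta>) \<or> (\<beta> = rotate m \<beta> \<and> \<alpha> = rotate m \<alpha>)" for m
    using cmp[of \<alpha> j m] j(1) by (simp add: \<beta>_def)
  have cmp_rev_\<beta>:
    "lex_less \<beta> (rotate m (rev \<beta>)) \<or> (\<beta> = rotate m (rev \<beta>) \<and> \<alpha> = rotate m (rev \<alpha>))" for m
    using cmp[of "rev \<alpha>" "length \<alpha> - j - 1" m] j(1) by (simp add: rev_\<beta> rev_nth)
  show "is_bracelet \<beta>"
    unfolding is_bracelet_def lex_le_def rotations_eq_range using cmp_\<beta> cmp_rev_\<beta> by blast
  show "\<alpha> \<in> rotations (rev \<alpha>)" if sym: "\<beta> \<in> rotations (rev \<beta>)"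
  proof -
    obtain m where m: "\<beta> = rotate m (rev \<beta>)"
      using sym by (auto simp: rotations_eq_range)
    have "\<not> lex_less \<beta> \<beta>" by (simp add: lex_less_iff_nth)
    then have "\<alpha> = rotate m (rev \<alpha>)" using cmp_rev_\<beta>[of m] m by simp
    then show ?thesis by (simp add: rotations_eq_range)
  qed
qed

lemma first_nonzero_spec:
  assumes "xs \<noteq> replicate (length xs) 0"
  shows "first_nonzero xs < length xs" and "\<forall>q<first_nonzero xs. xs ! q = 0"
proof -
  have ex: "\<exists>i. i < length xs \<and> xs ! i \<noteq> 0"
    using assms by (metis in_set_conv_nth replicate_eqI)
  show "first_nonzero xs < length xs"
    using LeastI_ex[OF ex] unfolding first_nonzero_def by blast
  show "\<forall>q<first_nonzero xs. xs ! q = 0"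
    using not_less_Least \<open>first_nonzero xs < length xs\<close>
    unfolding first_nonzero_def by fastforce
qed

lemma over_alphabet_decrement: "over_alphabet k xs \<Longrightarrow> over_alphabet k (xs[j := xs ! j - 1])"
  unfolding over_alphabet_def
  by (metis insert_iff le_less_trans diff_le_self nth_list_update_eq list_update_beyond
      set_update_subset_insert subsetD not_le nth_mem)

theorem mainTheorem3:
  fixes k n :: nat and \<alpha> :: "nat list"
  assumes "k \<ge> 2"
    and "length \<alpha> = n"
    and "over_alphabet k \<alpha>"
    and "\<alpha> \<noteq> replicate n 0"
    and "is_bracelet \<alpha>"
    and "\<alpha> ! first_nonzero \<alpha> > 1"
  shows "is_bracelet (FirstNonMin \<alpha>) \<and> over_alphabet k (FirstNonMin \<alpha>)
         \<and> length (FirstNonMin \<alpha>) = n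
         \<and> (\<alpha> \<in> asym_bracelets k n \<longrightarrow> FirstNonMin \<alpha> \<in> asym_bracelets k n)"
proof -
  define \<beta> where "\<beta> = FirstNonMin \<alpha>"
  have "\<alpha> \<noteq> replicate (length \<alpha>) 0" using assms(2,4) by simp
  moreover have "2 \<le> \<alpha> ! first_nonzero \<alpha>" using assms(6) by simp
  ultimately have dec: "is_bracelet \<beta>" "\<beta> \<in> rotations (rev \<beta>) \<Longrightarrow> \<alpha> \<in> rotations (rev \<alpha>)"
    using bracelet_decrement[OF assms(5) first_nonzero_spec] by (simp_all add: \<beta>_def FirstNonMin_def)
  have alph: "over_alphabet k \<beta>" and len: "length \<beta> = n"
    using over_alphabet_decrement[OF assms(3)] assms(2) by (simp_all add: \<beta>_def FirstNonMin_def)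
  have "\<beta> \<in> asym_bracelets k n" if "\<alpha> \<in> asym_bracelets k n"
  proof -
    have "rev \<alpha> \<notin> rotations \<alpha>"
      using that by (simp add: asym_bracelets_def asymmetric_necklace_def)
    then have "rev \<beta> \<notin> rotations \<beta>" using dec(2) rotations_sym by blast
    moreover have "is_necklace \<beta>"
      using dec(1) unfolding is_bracelet_def is_necklace_def by blast
    ultimately show ?thesis
      using dec(1) alph len by (simp add: asym_bracelets_def asymmetric_necklace_def)
  qed
  then show ?thesis using dec(1) alph len by (simp add: \<beta>_def)
qed

end
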